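(* Let $k\ge0$, $T\in\mathcal T_h$, and let $\mathrm s_T$ be a bilinear form on $\underline U_T^k$ satisfying (S1)–(S3) and depending on its arguments only through the residuals $\delta_T^k$ and $(\delta_{TF}^k)_{F\in\mathcal F_T}$, i.e. $\mathrm s_T(\underline u_T,\underline v_T)=\mathrm s_T(\underline u_T',\underline v_T')$ whenever $\delta_T^k\underline u_T=\delta_T^k\underline u_T'$, $\delta_{TF}^k\underline u_T=\delta_{TF}^k\underline u_T'$, $\delta_T^k\underline v_T=\delta_T^k\underline v_T'$, $\delta_{TF}^k\underline v_T=\delta_{TF}^k\underline v_T'$ for all $F\in\mathcal F_T$. Then for all $\underline u_T,\underline v_T\in\underline U_T^k$, $$\mathrm s_T(\underline u_T,\underline v_T)=\mathrm s_T\big((0,\Delta_{\partial T}^k\underline u_T),(0,\Delta_{\partial T}^k\underline v_T)\big).$$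
   Context: $T$ is an element (open polytope) of a polytopal mesh of a bounded polyhedral domain $\Omega\subset\mathbb R^d$, $\mathcal F_T$ the set of its (planar) faces, $\vec n_{TF}$ the unit normal to $F$ pointing out of $T$, $h_T,h_F$ diameters. $\mathbb P^l(X)$: polynomials of total degree $\le l$ on $X$; $(\cdot,\cdot)_X$, $\|\cdot\|_X$: $L^2(X)$ product and norm; $\pi_X^{0,l}$: $L^2(X)$-orthogonal projector onto $\mathbb P^l(X)$. $\underline U_T^k:=\mathbb P^k(T)\times\prod_{F\in\mathcal F_T}\mathbb P^k(F)$ with elements $\underline v_T=(v_T,(v_F)_{F\in\mathcal F_T})$; $\|\underline v_T\|_{1,T}^2:=\|\nabla v_T\|_T^2+\sum_Fh_F^{-1}\|v_F-v_T\|_F^2$; $\underline I_T^kv:=(\pi_T^{0,k}v,(\pi_F^{0,k}v|_F)_F)$. $p_T^{k+1}:\underline U_T^k\to\mathbb P^{k+1}(T)$ is defined by $(\nabla p_T^{k+1}\underline v_T,\nabla w)_T=-(v_T,\Delta w)_T+\sum_F(v_F,\nabla w\cdot\vec n_{TF})_F$ for all $w\in\mathbb P^{k+1}(T)$ and $(p_T^{k+1}\underline v_T-v_T,1)_T=0$. $\mathrm a_T(\underline u_T,\underline v_T):=(\nabla p_T^{k+1}\underline u_T,\nabla p_T^{k+1}\underline v_T)_T+\mathrm s_T(\underline u_T,\underline v_T)$. (S1) $\mathrm s_T$ symmetric positive semidefinite; (S2) there is $\eta>0$ with $\eta^{-1}\|\underline v_T\|_{1,T}^2\le\mathrm a_T(\underline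 v_T,\underline v_T)\le\eta\|\underline v_T\|_{1,T}^2$ for all $\underline v_T$; (S3) $\mathrm s_T(\underline I_T^kw,\underline v_T)=0$ for all $w\in\mathbb P^{k+1}(T)$, $\underline v_T\in\underline U_T^k$. Residuals: $\delta_T^k\underline v_T:=\pi_T^{0,k}(p_T^{k+1}\underline v_T-v_T)$ and $\delta_{TF}^k\underline v_T:=\pi_F^{0,k}(p_T^{k+1}\underline v_T-v_F)$ for $F\in\mathcal F_T$. Boundary difference operator $\Delta_{\partial T}^k:\underline U_T^k\to\prod_{F\in\mathcal F_T}\mathbb P^k(F)$, $\Delta_{\partial T}^k\underline v_T:=(v_F-v_T|_F)_{F\in\mathcal F_T}$; $(0,\Delta_{\partial T}^k\underline v_T)$ denotes the element of $\underline U_T^k$ with element component $0$ and face components $v_F-v_T|_F$. *)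

theory Defs
  imports "HOL-Analysis.Analysis"
begin

definition exps :: "nat \<Rightarrow> ('a::euclidean_space \<Rightarrow> nat) set" where
  "exps l = {\<alpha>. (\<forall>b. b \<notin> Basis \<longrightarrow> \<alpha> b = 0) \<and> (\<Sum>b\<in>Basis. \<alpha> b) \<le> l}"

definition mono :: "('a::euclidean_space \<Rightarrow> nat) \<Rightarrow> 'a \<Rightarrow> real" where
  "mono \<alpha> x = (\<Prod>b\<in>Basis. (x \<bullet> b) ^ \<alpha> b)"

text \<open>Global polynomial functions of total degree at most l (P^l(T) for open nonempty T,
  represented by the unique global polynomial).\<close>
definition polys :: "nat \<Rightarrow> ('a::euclidean_space \<Rightarrow> real) set" where
  "polys l = {f. \<exists>c. f = (\<lambda>x. \<Sum>\<alpha>\<in>exps l. c \<alpha> * mono \<alpha> x)}"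

text \<open>P^l(F): restrictions of polynomials to F, canonically extended by zero outside F.\<close>
definition polysF :: "'a::euclidean_space set \<Rightarrow> nat \<Rightarrow> ('a \<Rightarrow> real) set" where
  "polysF F l = {(\<lambda>x. if x \<in> F then p x else 0) | p. p \<in> polys l}"

definition pd :: "'a::euclidean_space \<Rightarrow> ('a \<Rightarrow> real) \<Rightarrow> 'a \<Rightarrow> real" where
  "pd b f x = deriv (\<lambda>t. f (x + t *\<^sub>R b)) 0"

definition grad :: "('a::euclidean_space \<Rightarrow> real) \<Rightarrow> 'a \<Rightarrow> 'a" where
  "grad f x = (\<Sum>b\<in>Basis. pd b f x *\<^sub>R b)"

definition lap :: "('a::euclidean_space \<Rightarrow> real) \<Rightarrow> 'a \<Rightarrow> real" where
  "lap f x = (\<Sum>b\<in>Basis. pd b (pd b f) x)"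

definition outward_unit_normal :: "'a::euclidean_space set \<Rightarrow> 'a set \<Rightarrow> 'a \<Rightarrow> bool" where
  "outward_unit_normal T F n \<longleftrightarrow> norm n = 1 \<and> (\<forall>x\<in>F. \<forall>y\<in>F. n \<bullet> (x - y) = 0) \<and>
     (\<forall>x\<in>F. \<exists>e>0. \<forall>t. 0 < t \<and> t < e \<longrightarrow> x + t *\<^sub>R n \<notin> T \<and> x - t *\<^sub>R n \<in> T)"

definition normal :: "'a::euclidean_space set \<Rightarrow> 'a set \<Rightarrow> 'a" where
  "normal T F = (THE n. outward_unit_normal T F n)"

definition polytopal_element :: "'a::euclidean_space set \<Rightarrow> 'a set set \<Rightarrow> bool" where
  "polytopal_element T FT \<longleftrightarrow>
     T \<noteq> {} \<and> connected T \<and>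
     (\<exists>P. finite P \<and> (\<forall>Q\<in>P. polytope Q) \<and> T = interior (\<Union>P)) \<and>
     finite FT \<and> frontier T = closure (\<Union>FT) \<and>
     (\<forall>F\<in>FT. \<forall>G\<in>FT. F \<noteq> G \<longrightarrow> F \<inter> G = {}) \<and>
     (\<forall>F\<in>FT. F \<noteq> {} \<and> connected F \<and> F \<subseteq> frontier T \<and>
        aff_dim F = int DIM('a) - 1 \<and>
        openin (top_of_set (affine hull F)) F \<and>
        (\<exists>n. outward_unit_normal T F n))"

definition ipT :: "'a::euclidean_space set \<Rightarrow> ('a \<Rightarrow> real) \<Rightarrow> ('a \<Rightarrow> real) \<Rightarrow> real" where
  "ipT T f g = integral T (\<lambda>x. f x * g x)"

text \<open>Integral over a planar face F with respect to the (d-1)-dimensional surface measure: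
  the integral of the normal-constant extension over the unit-height prism F + [0,1] n.\<close>
definition face_integral :: "'a::euclidean_space set \<Rightarrow> 'a set \<Rightarrow> ('a \<Rightarrow> real) \<Rightarrow> real" where
  "face_integral T F g =
     (let n = normal T F; a = (SOME x. x \<in> F) in
      integral {x + t *\<^sub>R n | x t. x \<in> F \<and> t \<in> {0..1}}
               (\<lambda>y. g (y - ((y - a) \<bullet> n) *\<^sub>R n)))"

definition ipF :: "'a::euclidean_space set \<Rightarrow> 'a set \<Rightarrow> ('a \<Rightarrow> real) \<Rightarrow> ('a \<Rightarrow> real) \<Rightarrow> real" where
  "ipF T F f g = face_integral T F (\<lambda>x. f x * g x)"

definition projT :: "'a::euclidean_space set \<Rightarrow> nat \<Rightarrow> ('a \<Rightarrow> real) \<Rightarrow> ('a \<Rightarrow> real)" where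
  "projT T l f = (THE g. g \<in> polys l \<and> (\<forall>q\<in>polys l. ipT T (\<lambda>x. f x - g x) q = 0))"

definition projF :: "'a::euclidean_space set \<Rightarrow> 'a set \<Rightarrow> nat \<Rightarrow> ('a \<Rightarrow> real) \<Rightarrow> ('a \<Rightarrow> real)" where
  "projF T F l f = (THE g. g \<in> polysF F l \<and> (\<forall>q\<in>polysF F l. ipF T F (\<lambda>x. f x - g x) q = 0))"

type_synonym 'a hho = "('a \<Rightarrow> real) \<times> ('a set \<Rightarrow> 'a \<Rightarrow> real)"

definition UT :: "'a::euclidean_space set set \<Rightarrow> nat \<Rightarrow> 'a hho set" where
  "UT FT k = {(vT, vF). vT \<in> polys k \<and> (\<forall>F\<in>FT. vF F \<in> polysF F k) \<and>
                        (\<forall>F. F \<notin> FT \<longrightarrow> vF F = (\<lambda>_. 0))}"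

definition hho_add :: "'a hho \<Rightarrow> 'a hho \<Rightarrow> 'a hho" where
  "hho_add u v = ((\<lambda>x. fst u x + fst v x), (\<lambda>F x. snd u F x + snd v F x))"

definition hho_scale :: "real \<Rightarrow> 'a hho \<Rightarrow> 'a hho" where
  "hho_scale c v = ((\<lambda>x. c * fst v x), (\<lambda>F x. c * snd v F x))"

definition pT :: "'a::euclidean_space set \<Rightarrow> 'a set set \<Rightarrow> nat \<Rightarrow> 'a hho \<Rightarrow> ('a \<Rightarrow> real)" where
  "pT T FT k v = (THE r. r \<in> polys (Suc k) \<and>
      (\<forall>w\<in>polys (Suc k).
         integral T (\<lambda>x. grad r x \<bullet> grad w x) =
           - ipT T (fst v) (lap w) + (\<Sum>F\<in>FT. ipF T F (snd v F) (\<lambda>x. grad w x \<bullet> normal T F))) \<and>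
      integral T (\<lambda>x. r x - fst v x) = 0)"

definition resT :: "'a::euclidean_space set \<Rightarrow> 'a set set \<Rightarrow> nat \<Rightarrow> 'a hho \<Rightarrow> ('a \<Rightarrow> real)" where
  "resT T FT k v = projT T k (\<lambda>x. pT T FT k v x - fst v x)"

definition resTF :: "'a::euclidean_space set \<Rightarrow> 'a set set \<Rightarrow> nat \<Rightarrow> 'a set \<Rightarrow> 'a hho \<Rightarrow> ('a \<Rightarrow> real)" where
  "resTF T FT k F v = projF T F k (\<lambda>x. pT T FT k v x - snd v F x)"

definition interpT :: "'a::euclidean_space set \<Rightarrow> 'a set set \<Rightarrow> nat \<Rightarrow> ('a \<Rightarrow> real) \<Rightarrow> 'a hho" where
  "interpT T FT k w = (projT T k w, (\<lambda>F. if F \<in> FT then projF T F k w else (\<lambda>_. 0)))"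

text \<open>(0, Delta_dT v): zero element component, face components v_F - v_T|_F.\<close>
definition bdiff :: "'a::euclidean_space set set \<Rightarrow> 'a hho \<Rightarrow> 'a hho" where
  "bdiff FT v = ((\<lambda>_. 0), (\<lambda>F. if F \<in> FT then (\<lambda>x. if x \<in> F then snd v F x - fst v x else 0)
                               else (\<lambda>_. 0)))"

definition norm1T_sq :: "'a::euclidean_space set \<Rightarrow> 'a set set \<Rightarrow> 'a hho \<Rightarrow> real" where
  "norm1T_sq T FT v = integral T (\<lambda>x. grad (fst v) x \<bullet> grad (fst v) x) +
     (\<Sum>F\<in>FT. (1 / diameter F) * ipF T F (\<lambda>x. snd v F x - fst v x) (\<lambda>x. snd v F x - fst v x))"

definition aT :: "'a::euclidean_space set \<Rightarrow> 'a set set \<Rightarrow> nat \<Rightarrow> ('a hho \<Rightarrow> 'a hho \<Rightarrow> real)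
                   \<Rightarrow> 'a hho \<Rightarrow> 'a hho \<Rightarrow> real" where
  "aT T FT k s u v = integral T (\<lambda>x. grad (pT T FT k u) x \<bullet> grad (pT T FT k v) x) + s u v"

definition bilinear_on :: "'a hho set \<Rightarrow> ('a hho \<Rightarrow> 'a hho \<Rightarrow> real) \<Rightarrow> bool" where
  "bilinear_on U s \<longleftrightarrow>
     (\<forall>u\<in>U. \<forall>u'\<in>U. \<forall>v\<in>U. \<forall>a b. s (hho_add (hho_scale a u) (hho_scale b u')) v = a * s u v + b * s u' v) \<and>
     (\<forall>u\<in>U. \<forall>v\<in>U. \<forall>v'\<in>U. \<forall>a b. s u (hho_add (hho_scale a v) (hho_scale b v')) = a * s u v + b * s u v')"

end

theory Submission
  imports Defs "HOL-Computational_Algebra.Polynomial"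
begin

text \<open>Every \<open>u\<close> splits as \<open>(0, \<Delta>\<^sub>\<partial>\<^sub>T u) + I\<^sub>T\<^sup>k u\<^sub>T\<close>, because the
  \<open>L\<^sup>2\<close>-projections onto \<open>P\<^sup>k(T)\<close> and \<open>P\<^sup>k(F)\<close> reproduce polynomials of degree \<open>k\<close>: the
  \<open>L\<^sup>2\<close>-products are definite on polynomials, on a face because the face integral is a volume
  integral over a prism above the face. By (S3) and symmetry, \<open>s\<close> vanishes whenever one argument
  is an interpolant, and bilinearity gives the claim.\<close>

lemma finite_exps: "finite (exps l :: ('a::euclidean_space \<Rightarrow> nat) set)"
proof -
  have "(exps l :: ('a \<Rightarrow> nat) set) \<subseteq> (\<lambda>f b. if b \<in> Basis then f b else 0) ` (Basis \<rightarrow>\<^sub>E {..l})"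
  proof
    fix \<alpha> :: "'a \<Rightarrow> nat" assume \<alpha>: "\<alpha> \<in> exps l"
    then have "\<alpha> = (\<lambda>b. if b \<in> Basis then restrict \<alpha> Basis b else 0)"
      by (auto simp: exps_def)
    moreover have "\<alpha> b \<le> l" if "b \<in> Basis" for b
      using \<alpha> that unfolding exps_def
      by (metis (no_types, lifting) finite_Basis member_le_sum mem_Collect_eq order_trans zero_le)
    then have "restrict \<alpha> Basis \<in> Basis \<rightarrow>\<^sub>E {..l}"
      by (simp add: restrict_PiE_iff)
    ultimately show "\<alpha> \<in> (\<lambda>f b. if b \<in> Basis then f b else 0) ` (Basis \<rightarrow>\<^sub>E {..l})"
      by (rule image_eqI)
  qed
  then show ?thesis
    by (rule finite_subset) (intro finite_imageI finite_PiE; simp)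
qed

lemma exps_subset_Suc: "exps l \<subseteq> exps (Suc l)"
  by (auto simp: exps_def)

lemma polys_subset_Suc: "polys l \<subseteq> polys (Suc l)"
proof
  fix p assume "p \<in> polys l"
  then obtain c where c: "p = (\<lambda>x. \<Sum>\<alpha>\<in>exps l. c \<alpha> * mono \<alpha> x)"
    by (auto simp: polys_def)
  define c' where "c' \<alpha> = (if \<alpha> \<in> exps l then c \<alpha> else 0)" for \<alpha>
  have "(\<Sum>\<alpha>\<in>exps l. c \<alpha> * mono \<alpha> x) = (\<Sum>\<alpha>\<in>exps (Suc l). c' \<alpha> * mono \<alpha> x)" for x
    by (rule sum.mono_neutral_cong_left) (auto simp: finite_exps exps_subset_Suc[THEN subsetD] c'_def)
  then show "p \<in> polys (Suc l)"
    unfolding polys_def c by blast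
qed

lemma polys_diff: "p \<in> polys l \<Longrightarrow> q \<in> polys l \<Longrightarrow> (\<lambda>x. p x - q x) \<in> polys l"
proof -
  assume "p \<in> polys l" "q \<in> polys l"
  then obtain c d where "p = (\<lambda>x. \<Sum>\<alpha>\<in>exps l. c \<alpha> * mono \<alpha> x)"
    and "q = (\<lambda>x. \<Sum>\<alpha>\<in>exps l. d \<alpha> * mono \<alpha> x)"
    by (auto simp: polys_def)
  then have "(\<lambda>x. p x - q x) = (\<lambda>x. \<Sum>\<alpha>\<in>exps l. (c \<alpha> - d \<alpha>) * mono \<alpha> x)"
    by (simp add: sum_subtractf[symmetric] left_diff_distrib)
  then show ?thesis
    unfolding polys_def mem_Collect_eq by (rule exI[of _ "\<lambda>\<alpha>. c \<alpha> - d \<alpha>"])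
qed

lemma zero_in_polys: "(\<lambda>x. 0) \<in> polys l"
  unfolding polys_def by (rule CollectI, rule exI[of _ "\<lambda>_. 0"]) simp

lemma continuous_on_polys: "p \<in> polys l \<Longrightarrow> continuous_on UNIV p"
  unfolding polys_def mono_def by (auto intro!: continuous_intros)

lemma polys_along_line: "p \<in> polys l \<Longrightarrow> \<exists>P. \<forall>t. p (x + t *\<^sub>R v) = poly P t"
proof -
  assume "p \<in> polys l"
  then obtain c where c: "p = (\<lambda>x. \<Sum>\<alpha>\<in>exps l. c \<alpha> * mono \<alpha> x)"
    by (auto simp: polys_def)
  define P where "P = (\<Sum>\<alpha>\<in>exps l. smult (c \<alpha>) (\<Prod>b\<in>Basis. [: x \<bullet> b, v \<bullet> b :] ^ \<alpha> b))"
  have "\<forall>t. p (x + t *\<^sub>R v) = poly P t"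
    by (simp add: c P_def mono_def poly_sum poly_prod inner_add_left algebra_simps)
  then show ?thesis by blast
qed

text \<open>On each line through a point of the open set, the restriction is a univariate
  polynomial with infinitely many roots.\<close>
lemma polys_eq_0_if_vanishes_on_open:
  assumes p: "p \<in> polys l" and S: "open S" "x0 \<in> S" and vanish: "\<forall>x\<in>S. p x = 0"
  shows "p = (\<lambda>_. 0)"
proof
  fix y
  obtain P where P: "\<forall>t. p (x0 + t *\<^sub>R (y - x0)) = poly P t"
    using polys_along_line[OF p] by blast
  let ?line = "\<lambda>t::real. x0 + t *\<^sub>R (y - x0)"
  have "open (?line -` S)"
    by (rule open_vimage[OF S(1)]) (intro continuous_intros)
  moreover have "0 \<in> ?line -` S"
    using S(2) by simp
  ultimately obtain e where e: "e > 0" "ball 0 e \<subseteq> ?line -` S"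
    by (rule openE)
  have "{-e<..<e} \<subseteq> {t. poly P t = 0}"
  proof
    fix t :: real assume "t \<in> {-e<..<e}"
    then have "t \<in> ball 0 e"
      by (simp add: dist_real_def abs_less_iff)
    then have "p (?line t) = 0"
      using e(2) vanish by blast
    then show "t \<in> {t. poly P t = 0}"
      using P by simp
  qed
  moreover have "infinite {-e<..<e}"
    using e(1) by simp
  ultimately have "infinite {t. poly P t = 0}"
    by (rule infinite_super)
  then have "P = 0"
    using poly_roots_finite by auto
  then show "p y = 0"
    using P[rule_format, of 1] by simp
qed

lemma continuous_imp_integrable_on_bounded:
  fixes f :: "'a::euclidean_space \<Rightarrow> real"
  assumes f: "continuous_on UNIV f" and S: "bounded S" "S \<in> sets lebesgue"
  shows "f integrable_on S"
proof -
  have "compact (f ` closure S)"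
    using S(1) f compact_closure compact_continuous_image continuous_on_subset by blast
  then obtain M where M: "\<forall>y\<in>f ` closure S. norm y \<le> M"
    using compact_imp_bounded bounded_iff by blast
  have "f absolutely_integrable_on S"
  proof (rule measurable_bounded_by_integrable_imp_absolutely_integrable[where g="\<lambda>_. M"])
    show "f \<in> borel_measurable (lebesgue_on S)"
      using f S(2) continuous_imp_measurable_on_sets_lebesgue continuous_on_subset by blast
    show "(\<lambda>_. M) integrable_on S"
      using S by (simp add: bounded_set_imp_lmeasurable integrable_on_const)
    show "\<And>x. x \<in> S \<Longrightarrow> norm (f x) \<le> M"
      using M closure_subset by blast
  qed (use S in auto)
  then show ?thesis
    using set_lebesgue_integral_eq_integral(1) by blast
qed

lemma nonneg_continuous_zero_if_integral_eq_0:
  fixes f :: "'a::euclidean_space \<Rightarrow> real"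
  assumes f: "continuous_on UNIV f" "\<forall>x. 0 \<le> f x"
    and S: "f integrable_on S" "integral S f = 0"
    and V: "open V" "V \<subseteq> S" "x \<in> V"
  shows "f x = 0"
proof -
  obtain a b where ab: "cbox a b \<subseteq> V" "x \<in> box a b"
    using open_contains_cbox[OF V(1) V(3)] by metis
  have f_ab: "f integrable_on cbox a b"
    by (meson f(1) integrable_continuous continuous_on_subset subset_UNIV)
  have "integral (cbox a b) f \<le> integral S f"
    by (rule integral_subset_le) (use ab V f_ab S f in auto)
  moreover have "0 \<le> integral (cbox a b) f"
    using f_ab f by (simp add: integral_nonneg)
  ultimately have "integral (cbox a b) f = 0"
    using S by linarith
  then have "(f has_integral 0) (cbox a b)"
    using f_ab by (metis has_integral_integral)
  moreover have "continuous_on (cbox a b) f"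
    using f(1) continuous_on_subset by blast
  moreover have "box a b \<noteq> {}" "x \<in> cbox a b"
    using ab box_subset_cbox by auto
  ultimately show ?thesis
    using has_integral_0_cbox_imp_0[of a b f x] f(2) by blast
qed

lemma ipT_self_eq_0_imp_zero:
  assumes h: "h \<in> polys l" and T: "open T" "bounded T" "T \<noteq> {}"
    and ip: "ipT T h h = 0"
  shows "h = (\<lambda>_. 0)"
proof -
  have hh: "continuous_on UNIV (\<lambda>x. h x * h x)"
    using continuous_on_polys[OF h] by (intro continuous_intros)
  have hh_T: "(\<lambda>x. h x * h x) integrable_on T"
    using hh T by (simp add: continuous_imp_integrable_on_bounded borel_open)
  have "h x = 0" if "x \<in> T" for x
  proof -
    have "h x * h x = 0"
      by (rule nonneg_continuous_zero_if_integral_eq_0[OF hh _ hh_T _ T(1) order_refl that])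
        (use ip in \<open>simp_all add: ipT_def\<close>)
    then show ?thesis
      by simp
  qed
  moreover obtain x0 where "x0 \<in> T"
    using T(3) by blast
  ultimately show ?thesis
    using polys_eq_0_if_vanishes_on_open[OF h T(1)] by blast
qed

lemma projT_polys:
  assumes p: "p \<in> polys l" and T: "open T" "bounded T" "T \<noteq> {}"
  shows "projT T l p = p"
  unfolding projT_def
proof (rule the_equality)
  show "p \<in> polys l \<and> (\<forall>q\<in>polys l. ipT T (\<lambda>x. p x - p x) q = 0)"
    using p by (simp add: ipT_def)
next
  fix g assume g: "g \<in> polys l \<and> (\<forall>q\<in>polys l. ipT T (\<lambda>x. p x - g x) q = 0)"
  then have pg: "(\<lambda>x. p x - g x) \<in> polys l"
    using p polys_diff by blast
  then have "ipT T (\<lambda>x. p x - g x) (\<lambda>x. p x - g x) = 0"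
    using g by blast
  then have "(\<lambda>x. p x - g x) = (\<lambda>_. 0)"
    by (rule ipT_self_eq_0_imp_zero[OF pg T])
  then show "g = p"
    by (metis eq_iff_diff_eq_0 ext)
qed

definition hyperplane_proj :: "'a::real_inner \<Rightarrow> 'a \<Rightarrow> 'a \<Rightarrow> 'a" where
  "hyperplane_proj n a y = y - ((y - a) \<bullet> n) *\<^sub>R n"

definition face_prism :: "'a::real_vector set \<Rightarrow> 'a \<Rightarrow> 'a set" where
  "face_prism F n = {x + t *\<^sub>R n | x t. x \<in> F \<and> t \<in> {0..1}}"

lemma face_integral_eq_prism_integral:
  "face_integral T F g =
     integral (face_prism F (normal T F)) (\<lambda>y. g (hyperplane_proj (normal T F) (SOME x. x \<in> F) y))"
  by (simp add: face_integral_def face_prism_def hyperplane_proj_def Let_def)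

lemma inner_hyperplane_proj: "norm n = 1 \<Longrightarrow> n \<bullet> hyperplane_proj n a y = n \<bullet> a"
  by (simp add: hyperplane_proj_def norm_eq_1 inner_diff_right inner_diff_left inner_commute)

lemma inner_add_normal_diff:
  "norm n = 1 \<Longrightarrow> n \<bullet> x = n \<bullet> a \<Longrightarrow> (x + t *\<^sub>R n - a) \<bullet> n = t"
  by (simp add: norm_eq_1 inner_diff_left inner_add_left inner_commute[of x n] inner_commute[of a n])

lemma hyperplane_proj_add_normal:
  "norm n = 1 \<Longrightarrow> n \<bullet> x = n \<bullet> a \<Longrightarrow> hyperplane_proj n a (x + t *\<^sub>R n) = x"
  by (simp add: hyperplane_proj_def inner_add_normal_diff)

lemma bounded_face_prism:
  fixes F :: "'a::real_normed_vector set"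
  assumes "bounded F"
  shows "bounded (face_prism F n)"
proof -
  obtain B where B: "\<forall>x\<in>F. norm x \<le> B"
    using assms bounded_iff by blast
  have "norm (x + t *\<^sub>R n) \<le> B + norm n" if "x \<in> F" "t \<in> {0..1}" for x t
  proof -
    have "norm (x + t *\<^sub>R n) \<le> norm x + \<bar>t\<bar> * norm n"
      using norm_triangle_ineq[of x "t *\<^sub>R n"] by simp
    also have "\<dots> \<le> B + norm n"
      using that B by (intro add_mono mult_left_le_one_le) auto
    finally show ?thesis .
  qed
  then show ?thesis
    unfolding bounded_iff face_prism_def by blast
qed

context
  fixes F U :: "'a::euclidean_space set" and n a :: 'a
  assumes unit: "norm n = 1" and U: "open U" and patch: "F = {z. n \<bullet> z = n \<bullet> a} \<inter> U"
begin

lemma mem_face_prism_iff: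
  "y \<in> face_prism F n \<longleftrightarrow> hyperplane_proj n a y \<in> F \<and> (y - a) \<bullet> n \<in> {0..1}"
proof
  assume "y \<in> face_prism F n"
  then obtain x t where xt: "y = x + t *\<^sub>R n" "x \<in> F" "t \<in> {0..1}"
    unfolding face_prism_def by blast
  moreover have "n \<bullet> x = n \<bullet> a"
    using xt(2) patch by blast
  ultimately show "hyperplane_proj n a y \<in> F \<and> (y - a) \<bullet> n \<in> {0..1}"
    using unit by (simp add: inner_add_normal_diff hyperplane_proj_add_normal)
next
  assume "hyperplane_proj n a y \<in> F \<and> (y - a) \<bullet> n \<in> {0..1}"
  moreover have "y = hyperplane_proj n a y + ((y - a) \<bullet> n) *\<^sub>R n"
    by (simp add: hyperplane_proj_def)
  ultimately show "y \<in> face_prism F n"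
    unfolding face_prism_def by blast
qed

lemma face_prism_in_lebesgue: "face_prism F n \<in> sets lebesgue"
proof -
  have "face_prism F n = hyperplane_proj n a -` U \<inter> (\<lambda>y. (y - a) \<bullet> n) -` {0..1}"
    using mem_face_prism_iff patch inner_hyperplane_proj[OF unit] by auto
  moreover have "open (hyperplane_proj n a -` U)"
    by (rule open_vimage[OF U]) (simp add: hyperplane_proj_def continuous_intros)
  moreover have "closed ((\<lambda>y. (y - a) \<bullet> n) -` {0..1})"
    by (rule closed_vimage) (auto intro!: continuous_intros)
  ultimately show ?thesis
    by (simp add: borel_open borel_closed sets.Int)
qed

lemma ball_subset_face_prism:
  assumes x: "x \<in> F"
  shows "\<exists>\<rho>>0. ball (x + (1/2) *\<^sub>R n) \<rho> \<subseteq> face_prism F n"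
proof -
  obtain r where r: "r > 0" "ball x r \<subseteq> U"
    using x patch U openE by blast
  have xa: "n \<bullet> x = n \<bullet> a"
    using x patch by blast
  define \<rho> where "\<rho> = min (r/2) (1/4)"
  have "y \<in> face_prism F n" if y: "y \<in> ball (x + (1/2) *\<^sub>R n) \<rho>" for y
  proof -
    define w where "w = y - (x + (1/2) *\<^sub>R n)"
    have w: "norm w < \<rho>"
      using y by (simp add: w_def dist_norm norm_minus_commute)
    have wn: "\<bar>w \<bullet> n\<bar> \<le> norm w"
      using Cauchy_Schwarz_ineq2[of w n] unit by simp
    have height: "(y - a) \<bullet> n = 1/2 + w \<bullet> n"
      using inner_add_normal_diff[OF unit xa, of "1/2"]
      by (simp add: w_def inner_diff_left inner_add_left algebra_simps)
    have "hyperplane_proj n a y - x = w - (w \<bullet> n) *\<^sub>R n"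
      using height by (simp add: hyperplane_proj_def w_def algebra_simps)
    then have "norm (hyperplane_proj n a y - x) \<le> norm w + \<bar>w \<bullet> n\<bar>"
      using norm_triangle_ineq4[of w "(w \<bullet> n) *\<^sub>R n"] unit by simp
    then have "hyperplane_proj n a y \<in> ball x r"
      using w wn by (simp add: \<rho>_def dist_norm norm_minus_commute)
    then have "hyperplane_proj n a y \<in> F"
      using r patch inner_hyperplane_proj[OF unit] by blast
    moreover have "\<bar>w \<bullet> n\<bar> < 1/4"
      using w wn by (simp add: \<rho>_def)
    then have "(y - a) \<bullet> n \<in> {0..1}"
      using height by auto
    ultimately show ?thesis
      using mem_face_prism_iff by blast
  qed
  moreover have "\<rho> > 0"
    using r by (simp add: \<rho>_def)
  ultimately show ?thesis
    by blast
qed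

lemma face_prism_square_integral_eq_0_imp_zero:
  fixes h :: "'a \<Rightarrow> real"
  assumes F: "bounded F" and h: "continuous_on UNIV h"
    and I: "integral (face_prism F n) (\<lambda>y. h (hyperplane_proj n a y) * h (hyperplane_proj n a y)) = 0"
    and x: "x \<in> F"
  shows "h x = 0"
proof -
  define f where "f = (\<lambda>y. h (hyperplane_proj n a y) * h (hyperplane_proj n a y))"
  have "continuous_on UNIV (hyperplane_proj n a)"
    unfolding hyperplane_proj_def by (intro continuous_intros)
  then have hp: "continuous_on UNIV (\<lambda>y. h (hyperplane_proj n a y))"
    using continuous_on_compose2[OF h] by blast
  have f: "continuous_on UNIV f"
    unfolding f_def by (rule continuous_on_mult[OF hp hp])
  have "f integrable_on face_prism F n"
    by (rule continuous_imp_integrable_on_bounded[OF f bounded_face_prism[OF F] face_prism_in_lebesgue])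
  moreover obtain \<rho> where "\<rho> > 0" "ball (x + (1/2) *\<^sub>R n) \<rho> \<subseteq> face_prism F n"
    using ball_subset_face_prism[OF x] by blast
  ultimately have "f (x + (1/2) *\<^sub>R n) = 0"
    using I by (intro nonneg_continuous_zero_if_integral_eq_0[OF f _ _ _ open_ball])
      (auto simp: f_def)
  moreover have "hyperplane_proj n a (x + (1/2) *\<^sub>R n) = x"
    using x patch unit hyperplane_proj_add_normal by blast
  ultimately show ?thesis
    by (simp add: f_def)
qed

end

lemma polytopal_elementD:
  assumes "polytopal_element T FT"
  shows "open T" "bounded T" "T \<noteq> {}"
proof -
  have "\<exists>P. finite P \<and> (\<forall>Q\<in>P. polytope Q) \<and> T = interior (\<Union>P)"
    using assms unfolding polytopal_element_def by (elim conjE)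
  then obtain P where P: "finite P" "\<forall>Q\<in>P. polytope Q" "T = interior (\<Union>P)"
    by blast
  then have "bounded (\<Union>P)"
    by (intro bounded_Union) (auto intro: compact_imp_bounded polytope_imp_compact)
  then show "bounded T"
    using P(3) by (simp add: bounded_interior)
  show "open T"
    using P(3) by simp
  show "T \<noteq> {}"
    using assms unfolding polytopal_element_def by (elim conjE)
qed

lemma polytopal_element_faceD:
  fixes T :: "'a::euclidean_space set"
  assumes "polytopal_element T FT" and "F \<in> FT"
  shows "F \<noteq> {}" "F \<subseteq> frontier T" "aff_dim F = int DIM('a) - 1"
    "openin (top_of_set (affine hull F)) F" "\<exists>n. outward_unit_normal T F n"
proof -
  have "\<forall>F\<in>FT. F \<noteq> {} \<and> connected F \<and> F \<subseteq> frontier T \<and> aff_dim F = int DIM('a) - 1 \<and>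
      openin (top_of_set (affine hull F)) F \<and> (\<exists>n. outward_unit_normal T F n)"
    using assms(1) unfolding polytopal_element_def by (elim conjE)
  then show "F \<noteq> {}" "F \<subseteq> frontier T" "aff_dim F = int DIM('a) - 1"
    "openin (top_of_set (affine hull F)) F" "\<exists>n. outward_unit_normal T F n"
    using assms(2) by simp_all
qed

lemma affine_hull_eq_hyperplane:
  fixes F :: "'a::euclidean_space set"
  assumes n: "n \<noteq> 0" "\<forall>x\<in>F. \<forall>y\<in>F. n \<bullet> (x - y) = 0" and a: "a \<in> F"
    and dim: "aff_dim F = int DIM('a) - 1"
  shows "affine hull F = {z. n \<bullet> z = n \<bullet> a}"
proof (rule affine_dim_equal)
  show "affine (affine hull F)"
    by simp
  show "affine {z. n \<bullet> z = n \<bullet> a}"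
    by (rule affine_hyperplane)
  show "affine hull F \<noteq> {}"
    using a hull_subset[of F affine] by blast
  have "F \<subseteq> {z. n \<bullet> z = n \<bullet> a}"
  proof
    fix x assume "x \<in> F"
    then have "n \<bullet> (x - a) = 0"
      using n(2) a by blast
    then show "x \<in> {z. n \<bullet> z = n \<bullet> a}"
      by (simp add: inner_diff_right)
  qed
  then show "affine hull F \<subseteq> {z. n \<bullet> z = n \<bullet> a}"
    by (rule hull_minimal) (rule affine_hyperplane)
  show "aff_dim (affine hull F) = aff_dim {z. n \<bullet> z = n \<bullet> a}"
    using dim n(1) by simp
qed

lemma unit_normal_of_hyperplane:
  fixes n m :: "'a::real_inner"
  assumes "norm n = 1" "norm m = 1" and "{z. n \<bullet> z = n \<bullet> a} \<subseteq> {z. m \<bullet> z = m \<bullet> a}"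
  shows "m = n \<or> m = - n"
proof -
  define c where "c = m \<bullet> n"
  define v where "v = m - c *\<^sub>R n"
  have "n \<bullet> n = 1" "m \<bullet> m = 1"
    using assms(1,2) by (simp_all add: norm_eq_1)
  then have vn: "v \<bullet> n = 0"
    by (simp add: v_def c_def inner_diff_left)
  then have "a + v \<in> {z. n \<bullet> z = n \<bullet> a}"
    by (simp add: inner_add_right inner_commute)
  then have "m \<bullet> (a + v) = m \<bullet> a"
    using assms(3) by blast
  then have "v \<bullet> v = 0"
    using vn by (simp add: v_def inner_add_right inner_diff_left inner_commute)
  then have m: "m = c *\<^sub>R n"
    by (simp add: v_def)
  then have "c * c = 1"
    using \<open>n \<bullet> n = 1\<close> \<open>m \<bullet> m = 1\<close> by simp
  then have "c = 1 \<or> c = -1"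
    using square_eq_1_iff by blast
  then show ?thesis
    using m by auto
qed

lemma outward_unit_normal_unique:
  fixes F :: "'a::euclidean_space set"
  assumes F: "F \<noteq> {}" "aff_dim F = int DIM('a) - 1"
    and n: "outward_unit_normal T F n" and m: "outward_unit_normal T F m"
  shows "m = n"
proof -
  obtain a where a: "a \<in> F"
    using F(1) by blast
  have unit: "norm n = 1" "norm m = 1"
    using n m unfolding outward_unit_normal_def by blast+
  have "affine hull F = {z. n \<bullet> z = n \<bullet> a}" "affine hull F = {z. m \<bullet> z = m \<bullet> a}"
    using n m unit unfolding outward_unit_normal_def
    by (auto intro!: affine_hull_eq_hyperplane[OF _ _ a F(2)])
  then have "m = n \<or> m = - n"
    using unit_normal_of_hyperplane[OF unit] by blast
  moreover have "m \<noteq> - n"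
  proof
    assume "m = - n"
    obtain e1 where e1: "e1 > 0" "\<forall>t. 0 < t \<and> t < e1 \<longrightarrow> a + t *\<^sub>R n \<notin> T"
      using n a unfolding outward_unit_normal_def by blast
    obtain e2 where e2: "e2 > 0" "\<forall>t. 0 < t \<and> t < e2 \<longrightarrow> a - t *\<^sub>R m \<in> T"
      using m a unfolding outward_unit_normal_def by blast
    have "a + (min e1 e2 / 2) *\<^sub>R n \<notin> T" "a - (min e1 e2 / 2) *\<^sub>R m \<in> T"
      using e1 e2 by auto
    then show False
      using \<open>m = - n\<close> by simp
  qed
  ultimately show ?thesis
    by blast
qed

lemma outward_unit_normal_normal:
  assumes "polytopal_element T FT" and "F \<in> FT"
  shows "outward_unit_normal T F (normal T F)"
proof -
  have "\<exists>!n. outward_unit_normal T F n"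
    using polytopal_element_faceD[OF assms] outward_unit_normal_unique by metis
  then show ?thesis
    unfolding normal_def by (rule theI')
qed

lemma polytopal_face_patch:
  fixes T :: "'a::euclidean_space set"
  assumes el: "polytopal_element T FT" and F: "F \<in> FT"
  obtains U where "norm (normal T F) = 1" "bounded F" "open U"
    "F = {z. normal T F \<bullet> z = normal T F \<bullet> (SOME x. x \<in> F)} \<inter> U"
proof -
  define a where "a = (SOME x. x \<in> F)"
  have a: "a \<in> F"
    using polytopal_element_faceD(1)[OF el F] by (simp add: a_def some_in_eq)
  have n: "norm (normal T F) = 1" "\<forall>x\<in>F. \<forall>y\<in>F. normal T F \<bullet> (x - y) = 0"
    using outward_unit_normal_normal[OF el F] unfolding outward_unit_normal_def by blast+
  then have "affine hull F = {z. normal T F \<bullet> z = normal T F \<bullet> a}"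
    using n(1) by (intro affine_hull_eq_hyperplane[OF _ n(2) a polytopal_element_faceD(3)[OF el F]]) auto
  then obtain U where "open U" "F = {z. normal T F \<bullet> z = normal T F \<bullet> a} \<inter> U"
    using polytopal_element_faceD(4)[OF el F] by (auto simp: openin_open)
  moreover have "bounded F"
    using polytopal_element_faceD(2)[OF el F] polytopal_elementD(2)[OF el]
    unfolding frontier_def by (meson Diff_subset bounded_closure bounded_subset order_trans)
  ultimately show ?thesis
    using that n(1) unfolding a_def by blast
qed

lemma face_integral_cong:
  fixes T :: "'a::euclidean_space set"
  assumes el: "polytopal_element T FT" and F: "F \<in> FT" and fg: "\<forall>x\<in>F. f x = g x"
  shows "face_integral T F f = face_integral T F g"
proof -
  obtain U where unit: "norm (normal T F) = 1" and U: "open U"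
    and patch: "F = {z. normal T F \<bullet> z = normal T F \<bullet> (SOME x. x \<in> F)} \<inter> U"
    using polytopal_face_patch[OF el F] by blast
  show ?thesis
    unfolding face_integral_eq_prism_integral
    using fg mem_face_prism_iff[OF unit U patch] by (intro integral_cong) blast
qed

lemma ipF_self_eq_0_imp_zero:
  fixes T :: "'a::euclidean_space set" and h :: "'a \<Rightarrow> real"
  assumes el: "polytopal_element T FT" and F: "F \<in> FT" and h: "continuous_on UNIV h"
    and ip: "ipF T F h h = 0" and x: "x \<in> F"
  shows "h x = 0"
proof -
  obtain U where unit: "norm (normal T F) = 1" and bounded: "bounded F" and U: "open U"
    and patch: "F = {z. normal T F \<bullet> z = normal T F \<bullet> (SOME x. x \<in> F)} \<inter> U"
    using polytopal_face_patch[OF el F] by blast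
  show ?thesis
    using ip unfolding ipF_def face_integral_eq_prism_integral
    by (rule face_prism_square_integral_eq_0_imp_zero[OF unit U patch bounded h _ x])
qed

lemma projF_polys:
  fixes T :: "'a::euclidean_space set"
  assumes el: "polytopal_element T FT" and F: "F \<in> FT" and p: "p \<in> polys l"
  shows "projF T F l p = (\<lambda>x. if x \<in> F then p x else 0)"
  unfolding projF_def
proof (rule the_equality)
  have "(\<lambda>x. (p x - (if x \<in> F then p x else 0)) * q x) = (\<lambda>_. 0)" if "q \<in> polysF F l" for q
    using that by (auto simp: polysF_def)
  then show "(\<lambda>x. if x \<in> F then p x else 0) \<in> polysF F l \<and>
      (\<forall>q\<in>polysF F l. ipF T F (\<lambda>x. p x - (if x \<in> F then p x else 0)) q = 0)"
    using p by (auto simp: polysF_def ipF_def face_integral_def Let_def)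
next
  fix g assume g: "g \<in> polysF F l \<and> (\<forall>q\<in>polysF F l. ipF T F (\<lambda>x. p x - g x) q = 0)"
  then obtain r where r: "r \<in> polys l" and g_def: "g = (\<lambda>x. if x \<in> F then r x else 0)"
    unfolding polysF_def by blast
  define h where "h = (\<lambda>x. p x - r x)"
  have h: "h \<in> polys l"
    unfolding h_def using p r by (rule polys_diff)
  then have "(\<lambda>x. if x \<in> F then h x else 0) \<in> polysF F l"
    unfolding polysF_def by blast
  then have "0 = ipF T F (\<lambda>x. p x - g x) (\<lambda>x. if x \<in> F then h x else 0)"
    using g by simp
  also have "\<dots> = ipF T F h h"
    unfolding ipF_def by (rule face_integral_cong[OF el F]) (simp add: g_def h_def)
  finally have "\<forall>x\<in>F. h x = 0"
    using ipF_self_eq_0_imp_zero[OF el F continuous_on_polys[OF h]] by simp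
  then show "g = (\<lambda>x. if x \<in> F then p x else 0)"
    by (auto simp: g_def h_def)
qed

lemma interpT_polys:
  fixes T :: "'a::euclidean_space set"
  assumes el: "polytopal_element T FT" and w: "w \<in> polys k"
  shows "interpT T FT k w = (w, \<lambda>F. if F \<in> FT then (\<lambda>x. if x \<in> F then w x else 0) else (\<lambda>_. 0))"
  using projT_polys[OF w polytopal_elementD[OF el]] projF_polys[OF el _ w]
  unfolding interpT_def by (auto intro!: ext)

lemma interpT_in_UT:
  fixes T :: "'a::euclidean_space set"
  assumes "polytopal_element T FT" and "w \<in> polys k"
  shows "interpT T FT k w \<in> UT FT k"
  using assms by (auto simp: interpT_polys UT_def polysF_def)

lemma bdiff_in_UT:
  assumes u: "u \<in> UT FT k"
  shows "bdiff FT u \<in> UT FT k"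
proof -
  have "(\<lambda>x. if x \<in> F then snd u F x - fst u x else 0) \<in> polysF F k" if F: "F \<in> FT" for F
  proof -
    obtain r where r: "r \<in> polys k" "snd u F = (\<lambda>x. if x \<in> F then r x else 0)"
      using u F unfolding UT_def polysF_def by auto
    moreover have "fst u \<in> polys k"
      using u unfolding UT_def by auto
    ultimately have "(\<lambda>x. r x - fst u x) \<in> polys k"
      by (simp add: polys_diff)
    then show ?thesis
      unfolding polysF_def using r(2) by (auto intro!: exI[of _ "\<lambda>x. r x - fst u x"])
  qed
  then show ?thesis
    by (auto simp: UT_def bdiff_def zero_in_polys)
qed

lemma hho_decompose:
  fixes T :: "'a::euclidean_space set"
  assumes el: "polytopal_element T FT" and u: "u \<in> UT FT k"
  shows "u = hho_add (hho_scale 1 (bdiff FT u)) (hho_scale 1 (interpT T FT k (fst u)))"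
proof -
  obtain uT uF where u_eq: "u = (uT, uF)"
    by (cases u)
  have uT: "uT \<in> polys k" and uF: "\<forall>F\<in>FT. uF F \<in> polysF F k" "\<forall>F. F \<notin> FT \<longrightarrow> uF F = (\<lambda>_. 0)"
    using u unfolding u_eq UT_def by blast+
  have "uF F x = 0" if "F \<notin> FT \<or> x \<notin> F" for F x
    using uF that by (cases "F \<in> FT") (auto simp: polysF_def)
  then show ?thesis
    by (auto simp: u_eq hho_add_def hho_scale_def bdiff_def interpT_polys[OF el uT] intro!: ext)
qed

theorem proposition3:
  fixes T :: "'a::euclidean_space set" and FT :: "'a set set" and k :: nat
    and s :: "'a hho \<Rightarrow> 'a hho \<Rightarrow> real"
  assumes elem: "polytopal_element T FT"
    and bilin: "bilinear_on (UT FT k) s"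
    and S1: "\<forall>u\<in>UT FT k. \<forall>v\<in>UT FT k. s u v = s v u" "\<forall>v\<in>UT FT k. 0 \<le> s v v"
    and S2: "\<exists>\<eta>>0. \<forall>v\<in>UT FT k. (1 / \<eta>) * norm1T_sq T FT v \<le> aT T FT k s v v \<and>
                                 aT T FT k s v v \<le> \<eta> * norm1T_sq T FT v"
    and S3: "\<forall>w\<in>polys (Suc k). \<forall>v\<in>UT FT k. s (interpT T FT k w) v = 0"
    and res: "\<forall>u\<in>UT FT k. \<forall>u'\<in>UT FT k. \<forall>v\<in>UT FT k. \<forall>v'\<in>UT FT k.
               resT T FT k u = resT T FT k u' \<and> (\<forall>F\<in>FT. resTF T FT k F u = resTF T FT k F u') \<and>
               resT T FT k v = resT T FT k v' \<and> (\<forall>F\<in>FT. resTF T FT k F v = resTF T FT k F v')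
               \<longrightarrow> s u v = s u' v'"
  shows "\<forall>u\<in>UT FT k. \<forall>v\<in>UT FT k. s u v = s (bdiff FT u) (bdiff FT v)"
proof (intro ballI)
  fix u v assume u: "u \<in> UT FT k" and v: "v \<in> UT FT k"
  let ?I = "\<lambda>w. interpT T FT k (fst w)"
  have fst_polys: "fst w \<in> polys k" if "w \<in> UT FT k" for w
    using that unfolding UT_def by auto
  have I_UT: "?I w \<in> UT FT k" if "w \<in> UT FT k" for w
    using interpT_in_UT[OF elem fst_polys[OF that]] .
  have I_left: "s (?I w) z = 0" if "w \<in> UT FT k" "z \<in> UT FT k" for w z
    using S3 fst_polys[OF that(1)] polys_subset_Suc that(2) by blast
  have I_right: "s z (?I w) = 0" if "w \<in> UT FT k" "z \<in> UT FT k" for w z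
    using I_left[OF that] S1(1) I_UT[OF that(1)] that(2) by metis
  have "s u v = 1 * s (bdiff FT u) v + 1 * s (?I u) v"
    using bilin bdiff_in_UT[OF u] I_UT[OF u] v hho_decompose[OF elem u]
    unfolding bilinear_on_def by metis
  also have "\<dots> = s (bdiff FT u) (hho_add (hho_scale 1 (bdiff FT v)) (hho_scale 1 (?I v)))"
    using I_left[OF u v] hho_decompose[OF elem v] by simp
  also have "\<dots> = 1 * s (bdiff FT u) (bdiff FT v) + 1 * s (bdiff FT u) (?I v)"
    using bilin bdiff_in_UT[OF u] bdiff_in_UT[OF v] I_UT[OF v]
    unfolding bilinear_on_def by blast
  also have "\<dots> = s (bdiff FT u) (bdiff FT v)"
    using I_right[OF v bdiff_in_UT[OF u]] by simp
  finally show "s u v = s (bdiff FT u) (bdiff FT v)" .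
qed

end
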